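(* Let $\boldsymbol{H}$ be a self-adjoint operator on $L^{2}(\mathbb{Z}_{p})$ defined on the dense subspace $\mathcal{D}(\mathbb{Z}_{p})$, with associated unitary group $e^{-i\boldsymbol{H}t}$, $t\in\mathbb{R}$. Let $\mathcal{N}\subset\mathbb{Z}_{p}$ have Haar measure zero and let $\{\mathcal{K}_{j}\}_{j\in\mathbb{J}}$ ($\mathbb{J}$ countable) be pairwise disjoint open compact subsets of $\mathbb{Z}_p$ with $\mathbb{Z}_{p}\smallsetminus\mathcal{N}=\bigsqcup_{j\in\mathbb{J}}\mathcal{K}_{j}$. Put $e_{v}=c_{v}1_{\mathcal{K}_{v}}$ with $c_v>0$ chosen so that $\|e_v\|_2=1$, and $\pi_{r,v}(t)=|\langle e_{r},e^{-i\boldsymbol{H}t}e_{v}\rangle|^{2}$ for $r,v\in\mathbb{J}$, $t\geq 0$. Assume (H1) $\mathcal{H}_{\mathbb{J}}:=\mathrm{Span}\{e_j;\ j\in\mathbb{J}\}$ is a Hilbert subspace of $L^{2}(\mathbb{Z}_{p})$, and (H2) $e^{-i\boldsymbol{H}t}\mathcal{H}_{\mathbb{J}}\subset\mathcal{H}_{\mathbb{J}}$ for $t\ge 0$. Then $\sum_{r\in\mathbb{J}}\pi_{r,v}(t)=1$ for all $t\geq0$ and every $v\in\mathbb{J}$.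
   Context: $p$ is a fixed prime, $\mathbb{Z}_p$ the $p$-adic integers with Haar measure $dx$ normalized by $\int_{\mathbb{Z}_p}dx=1$, $1_A$ the characteristic function of $A$, and $\langle f,g\rangle=\int_{\mathbb{Z}_p}f\overline{g}\,dx$. $\mathcal{D}(\mathbb{Z}_p)$ is the space of locally constant complex functions supported in $\mathbb{Z}_p$. *)

theory Defs
  imports "HOL-Probability.Probability"
begin

text \<open>Model of Z_p: a p-adic integer is identified with its digit sequence
  (x = sum x_i p^i), i.e. a function nat => nat with all values < p.
  The normalized Haar measure is the product of the uniform probability
  measures on the digits, and the p-adic topology is the product of the
  discrete topologies on the digits.\<close>

type_synonym zp = "nat \<Rightarrow> nat"

definition zp_haar :: "nat \<Rightarrow> zp measure" where
  "zp_haar p = PiM UNIV (\<lambda>_::nat. uniform_count_measure {..<p})"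

definition zp_top :: "nat \<Rightarrow> zp topology" where
  "zp_top p = product_topology (\<lambda>_::nat. discrete_topology {..<p}) UNIV"

text \<open>Square integrable complex functions on Z_p (representatives of L^2 classes).\<close>
definition L2 :: "nat \<Rightarrow> (zp \<Rightarrow> complex) set" where
  "L2 p = {f. f \<in> borel_measurable (zp_haar p)
              \<and> integrable (zp_haar p) (\<lambda>x. (cmod (f x))\<^sup>2)}"

definition zp_inner :: "nat \<Rightarrow> (zp \<Rightarrow> complex) \<Rightarrow> (zp \<Rightarrow> complex) \<Rightarrow> complex" where
  "zp_inner p f g = (LINT x|zp_haar p. f x * cnj (g x))"

definition zp_norm :: "nat \<Rightarrow> (zp \<Rightarrow> complex) \<Rightarrow> real" where
  "zp_norm p f = sqrt (LINT x|zp_haar p. (cmod (f x))\<^sup>2)"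

definition ae_eq :: "nat \<Rightarrow> (zp \<Rightarrow> complex) \<Rightarrow> (zp \<Rightarrow> complex) \<Rightarrow> bool" where
  "ae_eq p f g \<longleftrightarrow> (AE x in zp_haar p. f x = g x)"

text \<open>D(Z_p): locally constant complex functions on Z_p.\<close>
definition loc_const :: "nat \<Rightarrow> (zp \<Rightarrow> complex) set" where
  "loc_const p = {f. \<forall>x\<in>topspace (zp_top p). \<exists>V. openin (zp_top p) V \<and> x \<in> V
                      \<and> (\<forall>y\<in>V. f y = f x)}"

definition unitary_group :: "nat \<Rightarrow> (real \<Rightarrow> (zp \<Rightarrow> complex) \<Rightarrow> (zp \<Rightarrow> complex)) \<Rightarrow> bool" where
  "unitary_group p U \<longleftrightarrow>
     (\<forall>t. \<forall>f\<in>L2 p. U t f \<in> L2 p) \<and>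
     (\<forall>t. \<forall>f\<in>L2 p. \<forall>g\<in>L2 p. ae_eq p f g \<longrightarrow> ae_eq p (U t f) (U t g)) \<and>
     (\<forall>f\<in>L2 p. ae_eq p (U 0 f) f) \<and>
     (\<forall>s t. \<forall>f\<in>L2 p. ae_eq p (U (s + t) f) (U s (U t f))) \<and>
     (\<forall>t. \<forall>f\<in>L2 p. \<forall>g\<in>L2 p. zp_inner p (U t f) (U t g) = zp_inner p f g) \<and>
     (\<forall>f\<in>L2 p. ((\<lambda>t. zp_norm p (\<lambda>x. U t f x - f x)) \<longlongrightarrow> 0) (at 0))"

definition self_adjoint :: "nat \<Rightarrow> (zp \<Rightarrow> complex) set \<Rightarrow> ((zp \<Rightarrow> complex) \<Rightarrow> (zp \<Rightarrow> complex)) \<Rightarrow> bool" where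
  "self_adjoint p Dom H \<longleftrightarrow>
     Dom \<subseteq> L2 p \<and> (\<forall>f\<in>Dom. H f \<in> L2 p) \<and>
     (\<forall>f\<in>Dom. \<forall>g\<in>Dom. ae_eq p f g \<longrightarrow> ae_eq p (H f) (H g)) \<and>
     (\<forall>f\<in>L2 p. (\<exists>g\<in>Dom. ae_eq p f g) \<longrightarrow> f \<in> Dom) \<and>
     (\<forall>f\<in>L2 p. \<forall>\<epsilon>>0. \<exists>g\<in>Dom. zp_norm p (\<lambda>x. f x - g x) < \<epsilon>) \<and>
     (\<forall>f\<in>Dom. \<forall>g\<in>Dom. zp_inner p (H f) g = zp_inner p f (H g)) \<and>
     (\<forall>g\<in>L2 p. (\<exists>h\<in>L2 p. \<forall>f\<in>Dom. zp_inner p (H f) g = zp_inner p f h)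
                 \<longrightarrow> g \<in> Dom)"

text \<open>U t = exp(-i H t): H is (i times) the infinitesimal generator of U,
  i.e. Dom is exactly the set of f for which (U t f - f)/t converges in L^2
  as t \<rightarrow> 0, and the limit is -i H f.\<close>
definition generated_by :: "nat \<Rightarrow> (real \<Rightarrow> (zp \<Rightarrow> complex) \<Rightarrow> (zp \<Rightarrow> complex))
     \<Rightarrow> (zp \<Rightarrow> complex) set \<Rightarrow> ((zp \<Rightarrow> complex) \<Rightarrow> (zp \<Rightarrow> complex)) \<Rightarrow> bool" where
  "generated_by p U Dom H \<longleftrightarrow>
     (\<forall>f\<in>L2 p. f \<in> Dom \<longleftrightarrow>
        (\<exists>g\<in>L2 p. ((\<lambda>t. zp_norm p (\<lambda>x. (U t f x - f x) / complex_of_real t - g x)) \<longlongrightarrow> 0) (at 0))) \<and>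
     (\<forall>f\<in>Dom. ((\<lambda>t. zp_norm p (\<lambda>x. (U t f x - f x) / complex_of_real t + \<i> * H f x)) \<longlongrightarrow> 0) (at 0))"

definition basis_fun :: "nat \<Rightarrow> ('j \<Rightarrow> zp set) \<Rightarrow> 'j \<Rightarrow> zp \<Rightarrow> complex" where
  "basis_fun p K v = (\<lambda>x. complex_of_real
      ((1 / sqrt (measure (zp_haar p) (K v))) * indicator (K v) x))"

text \<open>H_J: the Hilbert subspace spanned by the e_j, i.e. the L^2-closure of
  the finite linear combinations of the e_j.\<close>
definition fin_span :: "nat \<Rightarrow> ('j \<Rightarrow> zp set) \<Rightarrow> 'j set \<Rightarrow> (zp \<Rightarrow> complex) set" where
  "fin_span p K J = {f. \<exists>F a. finite F \<and> F \<subseteq> J \<and>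
       f = (\<lambda>x. \<Sum>j\<in>F. a j * basis_fun p K j x)}"

definition hilbert_span :: "nat \<Rightarrow> ('j \<Rightarrow> zp set) \<Rightarrow> 'j set \<Rightarrow> (zp \<Rightarrow> complex) set" where
  "hilbert_span p K J = {f \<in> L2 p. \<forall>\<epsilon>>0. \<exists>g\<in>fin_span p K J.
       zp_norm p (\<lambda>x. f x - g x) < \<epsilon>}"

definition trans_prob :: "nat \<Rightarrow> ('j \<Rightarrow> zp set) \<Rightarrow> (real \<Rightarrow> (zp \<Rightarrow> complex) \<Rightarrow> (zp \<Rightarrow> complex))
     \<Rightarrow> 'j \<Rightarrow> 'j \<Rightarrow> real \<Rightarrow> real" where
  "trans_prob p K U r v t = (cmod (zp_inner p (basis_fun p K r) (U t (basis_fun p K v))))\<^sup>2"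

end

theory Submission
  imports Defs
begin

text \<open>The normalised indicators e_j = 1_{K_j} / sqrt (vol K_j) are orthonormal because the K_j
  are disjoint, and for f in L^2 and finite F one has
    ||f - sum_{j in F} b_j e_j||^2 = ||f||^2 - sum_{j in F} |<f, e_j>|^2 + sum_{j in F} |b_j - <f, e_j>|^2.
  This gives Bessel's inequality and, as every f in H_J is approximated by such finite combinations,
  Parseval's identity sum_j |<f, e_j>|^2 = ||f||^2 on H_J. By (H2) and unitarity, f = e^{-iHt} e_v
  lies in H_J and has norm 1, and |<f, e_r>|^2 = pi_{r,v}(t).\<close>

lemma prob_space_zp_haar: "0 < p \<Longrightarrow> prob_space (zp_haar p)"
  unfolding zp_haar_def
  by (intro prob_space_PiM prob_space_uniform_count_measure) auto

text \<open>The ball x + p^n Z_p, in terms of digit sequences.\<close>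

definition zp_cylinder :: "nat \<Rightarrow> nat \<Rightarrow> zp \<Rightarrow> zp set" where
  "zp_cylinder p n x = {y \<in> topspace (zp_top p). \<forall>i<n. y i = x i}"

lemma zp_cylinder_eq_prod_emb:
  "zp_cylinder p n x =
     prod_emb UNIV (\<lambda>_. uniform_count_measure {..<p}) {..<n} (\<Pi>\<^sub>E i\<in>{..<n}. {x i})"
  unfolding zp_cylinder_def prod_emb_def zp_top_def
  by (auto simp: PiE_iff space_PiM space_uniform_count_measure extensional_def)

lemma self_in_zp_cylinder: "x \<in> topspace (zp_top p) \<Longrightarrow> x \<in> zp_cylinder p n x"
  by (simp add: zp_cylinder_def)

lemma sets_zp_cylinder: "x \<in> topspace (zp_top p) \<Longrightarrow> zp_cylinder p n x \<in> sets (zp_haar p)"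
  unfolding zp_cylinder_eq_prod_emb zp_haar_def
  by (rule sets_PiM_I) (auto simp: sets_uniform_count_measure zp_top_def)

lemma emeasure_zp_cylinder:
  assumes "0 < p" "x \<in> topspace (zp_top p)"
  shows "emeasure (zp_haar p) (zp_cylinder p n x) = ennreal ((1 / real p) ^ n)"
proof -
  have "emeasure (zp_haar p) (zp_cylinder p n x) =
      (\<Prod>i<n. emeasure (uniform_count_measure {..<p}) {x i})"
    unfolding zp_cylinder_eq_prod_emb zp_haar_def
    using assms by (intro emeasure_PiM_emb)
      (auto simp: sets_uniform_count_measure zp_top_def intro: prob_space_uniform_count_measure)
  also have "\<dots> = (\<Prod>i<n. ennreal (1 / real p))"
    using assms by (intro prod.cong refl, subst emeasure_uniform_count_measure)
      (auto simp: zp_top_def PiE_iff ennreal_of_nat_eq_real_of_nat divide_ennreal)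
  finally show ?thesis
    by (simp add: prod_ennreal ennreal_power)
qed

lemma zp_cylinder_subset_openin:
  assumes "openin (zp_top p) V" "x \<in> V"
  obtains n where "zp_cylinder p n x \<subseteq> V"
proof -
  obtain W where W: "finite {i. W i \<noteq> {..<p}}" "x \<in> (\<Pi>\<^sub>E i\<in>UNIV. W i)" "(\<Pi>\<^sub>E i\<in>UNIV. W i) \<subseteq> V"
    using assms unfolding zp_top_def openin_product_topology_alt by auto
  obtain n where n: "{i. W i \<noteq> {..<p}} \<subseteq> {..<n}"
    using finite_nat_bounded[OF W(1)] by blast
  have "y i \<in> W i" if y: "y \<in> zp_cylinder p n x" for y i
  proof (cases "i < n")
    case True
    then show ?thesis
      using y W(2) by (auto simp: zp_cylinder_def PiE_iff)
  next
    case False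
    then have "W i = {..<p}"
      using n by auto
    then show ?thesis
      using y by (auto simp: zp_cylinder_def zp_top_def PiE_iff)
  qed
  then have "zp_cylinder p n x \<subseteq> (\<Pi>\<^sub>E i\<in>UNIV. W i)"
    by (auto simp: PiE_iff)
  then have "zp_cylinder p n x \<subseteq> V"
    using W(3) by (rule subset_trans)
  then show thesis
    by (rule that)
qed

lemma sets_zp_haar_openin:
  assumes "openin (zp_top p) V"
  shows "V \<in> sets (zp_haar p)"
proof -
  let ?C = "{zp_cylinder p n x | n x. x \<in> V \<and> zp_cylinder p n x \<subseteq> V}"
  have V_top: "V \<subseteq> topspace (zp_top p)"
    using assms openin_subset by blast
  have "V \<subseteq> \<Union>?C"
  proof
    fix x assume "x \<in> V"
    moreover obtain n where "zp_cylinder p n x \<subseteq> V"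
      using zp_cylinder_subset_openin[OF assms \<open>x \<in> V\<close>] .
    ultimately show "x \<in> \<Union>?C"
      using V_top self_in_zp_cylinder by blast
  qed
  then have "V = \<Union>?C"
    by blast
  moreover have "countable ?C"
  proof (rule countable_subset)
    show "?C \<subseteq> (\<lambda>(n, l). zp_cylinder p n (\<lambda>i. l ! i)) ` UNIV"
    proof
      fix S assume "S \<in> ?C"
      then obtain n x where "S = zp_cylinder p n x"
        by blast
      then show "S \<in> (\<lambda>(n, l). zp_cylinder p n (\<lambda>i. l ! i)) ` UNIV"
        by (intro image_eqI[where x="(n, map x [0..<n])"]) (auto simp: zp_cylinder_def)
    qed
  qed simp
  moreover have "?C \<subseteq> sets (zp_haar p)"
    using V_top by (blast intro: sets_zp_cylinder)
  ultimately show ?thesis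
    using sets.countable_Union[of ?C "zp_haar p"] by simp
qed

lemma measure_zp_haar_openin_pos:
  assumes "0 < p" "openin (zp_top p) V" "V \<noteq> {}"
  shows "0 < measure (zp_haar p) V"
proof -
  interpret prob_space "zp_haar p"
    using prob_space_zp_haar[OF assms(1)] .
  obtain x where x: "x \<in> V"
    using assms(3) by blast
  then obtain n where n: "zp_cylinder p n x \<subseteq> V"
    using zp_cylinder_subset_openin assms(2) by blast
  have "x \<in> topspace (zp_top p)"
    using x assms(2) openin_subset by blast
  then have "0 < emeasure (zp_haar p) (zp_cylinder p n x)"
    using assms(1) by (simp add: emeasure_zp_cylinder)
  also have "\<dots> \<le> emeasure (zp_haar p) V"
    using n sets_zp_haar_openin[OF assms(2)] by (intro emeasure_mono)
  finally show ?thesis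
    by (simp add: emeasure_eq_measure)
qed

lemma zp_inner_commute: "zp_inner p g f = cnj (zp_inner p f g)"
proof -
  have "(\<lambda>x. g x * cnj (f x)) = (\<lambda>x. cnj (f x * cnj (g x)))"
    by (simp add: mult.commute)
  then show ?thesis
    unfolding zp_inner_def by (simp only: Bochner_Integration.integral_cnj)
qed

lemma zp_inner_self: "zp_inner p f f = complex_of_real (LINT x|zp_haar p. (cmod (f x))\<^sup>2)"
proof -
  have "(\<lambda>x. f x * cnj (f x)) = (\<lambda>x. complex_of_real ((cmod (f x))\<^sup>2))"
    by (simp only: complex_norm_square)
  then show ?thesis
    unfolding zp_inner_def by (simp only: integral_complex_of_real)
qed

lemma L2_integrable:
  assumes "0 < p" "f \<in> L2 p"
  shows "integrable (zp_haar p) f"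
proof -
  interpret prob_space "zp_haar p"
    using prob_space_zp_haar[OF assms(1)] .
  have [measurable]: "f \<in> borel_measurable (zp_haar p)"
    using assms(2) by (simp add: L2_def)
  have "integrable (zp_haar p) (\<lambda>x. norm (f x ^ 2))"
    using assms(2) by (simp add: L2_def norm_power)
  then have "integrable (zp_haar p) (\<lambda>x. f x ^ 2)"
    by (rule iffD1[OF integrable_norm_iff, rotated]) measurable
  then show ?thesis
    by (rule square_integrable_imp_integrable[rotated]) measurable
qed

lemma cnj_basis_fun [simp]: "cnj (basis_fun p K j x) = basis_fun p K j x"
  by (simp add: basis_fun_def)

lemma basis_fun_eq_0: "x \<notin> K j \<Longrightarrow> basis_fun p K j x = 0"
  by (simp add: basis_fun_def)

lemma basis_fun_in_fin_span: "j \<in> J \<Longrightarrow> basis_fun p K j \<in> fin_span p K J"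
  unfolding fin_span_def by (intro CollectI exI[of _ "{j}"] exI[of _ "\<lambda>_. 1"]) auto

locale zp_cells =
  fixes p :: nat and J :: "'j set" and K :: "'j \<Rightarrow> zp set"
  assumes p_pos: "0 < p"
    and sets_cell: "j \<in> J \<Longrightarrow> K j \<in> sets (zp_haar p)"
    and measure_cell_pos: "j \<in> J \<Longrightarrow> 0 < measure (zp_haar p) (K j)"
    and disjoint_cells: "disjoint_family_on K J"
begin

sublocale M: prob_space "zp_haar p"
  using prob_space_zp_haar[OF p_pos] .

lemma borel_measurable_basis_fun [measurable]:
  "j \<in> J \<Longrightarrow> basis_fun p K j \<in> borel_measurable (zp_haar p)"
  unfolding basis_fun_def using sets_cell by measurable

lemma cmod_basis_fun_sq:
  "j \<in> J \<Longrightarrow> (cmod (basis_fun p K j x))\<^sup>2 = indicator (K j) x / measure (zp_haar p) (K j)"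
  using measure_cell_pos[of j] by (simp add: basis_fun_def indicator_def power_divide norm_divide)

lemma integrable_cmod_basis_fun_sq:
  "j \<in> J \<Longrightarrow> integrable (zp_haar p) (\<lambda>x. (cmod (basis_fun p K j x))\<^sup>2)"
  using sets_cell[of j] by (simp add: cmod_basis_fun_sq M.emeasure_eq_measure)

lemma integral_cmod_basis_fun_sq:
  "j \<in> J \<Longrightarrow> (LINT x|zp_haar p. (cmod (basis_fun p K j x))\<^sup>2) = 1"
  using sets_cell[of j] measure_cell_pos[of j] by (simp add: cmod_basis_fun_sq)

lemma basis_fun_in_L2: "j \<in> J \<Longrightarrow> basis_fun p K j \<in> L2 p"
  unfolding L2_def using integrable_cmod_basis_fun_sq by simp

lemma basis_fun_in_hilbert_span: "j \<in> J \<Longrightarrow> basis_fun p K j \<in> hilbert_span p K J"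
  unfolding hilbert_span_def using basis_fun_in_L2 basis_fun_in_fin_span
  by (auto intro!: bexI[of _ "basis_fun p K j"] simp: zp_norm_def)

lemma zp_inner_basis_fun_self: "j \<in> J \<Longrightarrow> zp_inner p (basis_fun p K j) (basis_fun p K j) = 1"
  by (simp add: zp_inner_self integral_cmod_basis_fun_sq)

lemma integrable_mult_basis_fun:
  assumes "f \<in> L2 p" "j \<in> J"
  shows "integrable (zp_haar p) (\<lambda>x. f x * basis_fun p K j x)"
proof -
  define c where "c = 1 / sqrt (measure (zp_haar p) (K j))"
  have "integrable (zp_haar p) (\<lambda>x. indicator (K j) x *\<^sub>R (f x * complex_of_real c))"
    using sets_cell[OF assms(2)] L2_integrable[OF p_pos assms(1)]
    by (intro integrable_mult_indicator Bochner_Integration.integrable_mult_left)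
  moreover have "indicator (K j) x *\<^sub>R (f x * complex_of_real c) = f x * basis_fun p K j x" for x
    by (simp add: basis_fun_def c_def indicator_def)
  ultimately show ?thesis
    by simp
qed

lemma cmod_sum_basis_fun_sq:
  assumes "finite F" "F \<subseteq> J"
  shows "(cmod (\<Sum>j\<in>F. b j * basis_fun p K j x))\<^sup>2 =
    (\<Sum>j\<in>F. (cmod (b j))\<^sup>2 * (cmod (basis_fun p K j x))\<^sup>2)"
proof (cases "\<exists>i\<in>F. x \<in> K i")
  case True
  then obtain i where i: "i \<in> F" "x \<in> K i"
    by blast
  have "basis_fun p K j x = 0" if "j \<in> F - {i}" for j
  proof (rule basis_fun_eq_0)
    have "K i \<inter> K j = {}"
      using that i(1) assms(2) by (intro disjoint_family_onD[OF disjoint_cells]) auto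
    then show "x \<notin> K j"
      using i(2) by blast
  qed
  then have "(\<Sum>j\<in>F - {i}. b j * basis_fun p K j x) = 0"
    "(\<Sum>j\<in>F - {i}. (cmod (b j))\<^sup>2 * (cmod (basis_fun p K j x))\<^sup>2) = 0"
    by simp_all
  then show ?thesis
    using assms(1) i(1) by (simp add: sum.remove[of F i] norm_mult power_mult_distrib)
next
  case False
  then show ?thesis
    by (simp add: basis_fun_eq_0)
qed

lemma integral_cmod_diff_sum_basis_fun_sq:
  assumes f: "f \<in> L2 p" and F: "finite F" "F \<subseteq> J"
  shows "(LINT x|zp_haar p. (cmod (f x - (\<Sum>j\<in>F. b j * basis_fun p K j x)))\<^sup>2) =
    (LINT x|zp_haar p. (cmod (f x))\<^sup>2) - (\<Sum>j\<in>F. (cmod (zp_inner p f (basis_fun p K j)))\<^sup>2)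
    + (\<Sum>j\<in>F. (cmod (b j - zp_inner p f (basis_fun p K j)))\<^sup>2)"
proof -
  define a where "a j = zp_inner p f (basis_fun p K j)" for j
  define h where "h j x = (cmod (b j))\<^sup>2 * (cmod (basis_fun p K j x))\<^sup>2
    - 2 * inner (b j) (f x * basis_fun p K j x)" for j x
  have inner_term: "inner z (c * basis_fun p K j x) = inner c (z * basis_fun p K j x)" for z c j x
    by (simp add: basis_fun_def inner_complex_def algebra_simps)
  have pointwise: "(cmod (f x - g))\<^sup>2 = (cmod (f x))\<^sup>2 + (\<Sum>j\<in>F. h j x)"
    if "g = (\<Sum>j\<in>F. b j * basis_fun p K j x)" for g x
  proof -
    have "(cmod (f x - g))\<^sup>2 = (cmod (f x))\<^sup>2 + (cmod g)\<^sup>2 - 2 * inner (f x) g"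
      using dot_norm_neg[of "f x" g] by (simp add: field_simps)
    also have "\<dots> = (cmod (f x))\<^sup>2 + (\<Sum>j\<in>F. h j x)"
      by (simp add: that h_def cmod_sum_basis_fun_sq[OF F] inner_sum_right inner_term
          sum_subtractf sum_distrib_left)
    finally show ?thesis .
  qed
  have h_integrable: "integrable (zp_haar p) (h j)" if "j \<in> J" for j
    unfolding h_def using that f
    by (simp add: integrable_mult_basis_fun integrable_cmod_basis_fun_sq)
  have integral_h: "(LINT x|zp_haar p. h j x) = (cmod (b j))\<^sup>2 - 2 * inner (b j) (a j)"
    if "j \<in> J" for j
    unfolding h_def a_def zp_inner_def using that f
    by (simp add: integrable_mult_basis_fun integrable_cmod_basis_fun_sq
        integral_cmod_basis_fun_sq)
  have "(LINT x|zp_haar p. (cmod (f x - (\<Sum>j\<in>F. b j * basis_fun p K j x)))\<^sup>2) =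
      (LINT x|zp_haar p. (cmod (f x))\<^sup>2) + (\<Sum>j\<in>F. (cmod (b j))\<^sup>2 - 2 * inner (b j) (a j))"
  proof -
    have "integrable (zp_haar p) (\<lambda>x. \<Sum>j\<in>F. h j x)"
      using F h_integrable by (intro Bochner_Integration.integrable_sum) auto
    then show ?thesis
      unfolding pointwise[OF refl] using f F h_integrable integral_h
      by (simp add: L2_def subset_iff Bochner_Integration.integral_sum)
  qed
  also have "\<dots> = (LINT x|zp_haar p. (cmod (f x))\<^sup>2) - (\<Sum>j\<in>F. (cmod (a j))\<^sup>2)
      + (\<Sum>j\<in>F. (cmod (b j - a j))\<^sup>2)"
  proof -
    have "(cmod (b j))\<^sup>2 - 2 * inner (b j) (a j) = (cmod (b j - a j))\<^sup>2 - (cmod (a j))\<^sup>2" for j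
      using dot_norm_neg[of "b j" "a j"] by (simp add: field_simps)
    then show ?thesis
      by (simp add: sum_subtractf)
  qed
  finally show ?thesis
    unfolding a_def .
qed

lemma bessel_inequality:
  assumes "f \<in> L2 p" "finite F" "F \<subseteq> J"
  shows "(\<Sum>j\<in>F. (cmod (zp_inner p f (basis_fun p K j)))\<^sup>2) \<le> (LINT x|zp_haar p. (cmod (f x))\<^sup>2)"
proof -
  have "0 \<le> (LINT x|zp_haar p.
      (cmod (f x - (\<Sum>j\<in>F. zp_inner p f (basis_fun p K j) * basis_fun p K j x)))\<^sup>2)"
    by simp
  then show ?thesis
    unfolding integral_cmod_diff_sum_basis_fun_sq[OF assms] by simp
qed

lemma parseval_hilbert_span:
  assumes f: "f \<in> hilbert_span p K J"
  shows "((\<lambda>j. (cmod (zp_inner p f (basis_fun p K j)))\<^sup>2) has_sum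
    (LINT x|zp_haar p. (cmod (f x))\<^sup>2)) J"
proof -
  define s where "s j = (cmod (zp_inner p f (basis_fun p K j)))\<^sup>2" for j
  define N where "N = (LINT x|zp_haar p. (cmod (f x))\<^sup>2)"
  have f_L2: "f \<in> L2 p"
    using f by (simp add: hilbert_span_def)
  have "(sum s \<longlongrightarrow> N) (finite_subsets_at_top J)"
  proof (rule tendstoI)
    fix \<epsilon> :: real
    assume "0 < \<epsilon>"
    then obtain g where g: "g \<in> fin_span p K J" "zp_norm p (\<lambda>x. f x - g x) < sqrt \<epsilon>"
      using f real_sqrt_gt_zero unfolding hilbert_span_def by blast
    then obtain F b where F: "finite F" "F \<subseteq> J" "g = (\<lambda>x. \<Sum>j\<in>F. b j * basis_fun p K j x)"
      unfolding fin_span_def by blast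
    have "N - sum s F \<le> (LINT x|zp_haar p. (cmod (f x - g x))\<^sup>2)"
      unfolding F(3) integral_cmod_diff_sum_basis_fun_sq[OF f_L2 F(1,2)] N_def s_def
      by (simp add: sum_nonneg)
    also have "\<dots> < \<epsilon>"
      using g(2) by (simp add: zp_norm_def)
    finally have "N - sum s F < \<epsilon>" .
    show "\<forall>\<^sub>F G in finite_subsets_at_top J. dist (sum s G) N < \<epsilon>"
      unfolding eventually_finite_subsets_at_top
    proof (intro exI conjI allI impI)
      fix G
      assume G: "finite G \<and> F \<subseteq> G \<and> G \<subseteq> J"
      then have "sum s F \<le> sum s G"
        by (intro sum_mono2) (auto simp: s_def)
      moreover have "sum s G \<le> N"
        unfolding s_def N_def using G by (intro bessel_inequality f_L2) auto
      ultimately show "dist (sum s G) N < \<epsilon>"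
        using \<open>N - sum s F < \<epsilon>\<close> by (simp add: dist_real_def)
    qed (use F in auto)
  qed
  then show ?thesis
    unfolding has_sum_def s_def N_def .
qed

end

theorem proposition1:
  fixes p :: nat and Dom :: "(zp \<Rightarrow> complex) set"
    and H :: "(zp \<Rightarrow> complex) \<Rightarrow> (zp \<Rightarrow> complex)"
    and U :: "real \<Rightarrow> (zp \<Rightarrow> complex) \<Rightarrow> (zp \<Rightarrow> complex)"
    and N :: "zp set" and J :: "'j set" and K :: "'j \<Rightarrow> zp set"
  assumes "prime p"
    and "self_adjoint p Dom H"
    and "loc_const p \<subseteq> Dom"
    and "unitary_group p U"
    and "generated_by p U Dom H"
    and "N \<subseteq> topspace (zp_top p)" and "N \<in> null_sets (zp_haar p)"
    and "countable J"
    and "disjoint_family_on K J"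
    and "\<And>j. j \<in> J \<Longrightarrow> openin (zp_top p) (K j) \<and> compactin (zp_top p) (K j) \<and> K j \<noteq> {}"
    and "topspace (zp_top p) - N = (\<Union>j\<in>J. K j)"
    and H2: "\<And>t f. t \<ge> 0 \<Longrightarrow> f \<in> hilbert_span p K J \<Longrightarrow> U t f \<in> hilbert_span p K J"
    and "v \<in> J" and "t \<ge> 0"
  shows "((\<lambda>r. trans_prob p K U r v t) has_sum 1) J"
proof -
  have "0 < p"
    using \<open>prime p\<close> prime_gt_0_nat by blast
  moreover have "K j \<in> sets (zp_haar p)" "0 < measure (zp_haar p) (K j)" if "j \<in> J" for j
    using assms(10)[OF that] \<open>0 < p\<close> sets_zp_haar_openin measure_zp_haar_openin_pos by auto
  ultimately interpret zp_cells p J K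
    using \<open>disjoint_family_on K J\<close> by unfold_locales
  define f where "f = U t (basis_fun p K v)"
  have "f \<in> hilbert_span p K J"
    unfolding f_def using H2 \<open>t \<ge> 0\<close> basis_fun_in_hilbert_span \<open>v \<in> J\<close> by blast
  moreover have "zp_inner p f f = 1"
    using \<open>unitary_group p U\<close> basis_fun_in_L2[OF \<open>v \<in> J\<close>]
      zp_inner_basis_fun_self[OF \<open>v \<in> J\<close>]
    unfolding unitary_group_def f_def by simp
  moreover have "trans_prob p K U r v t = (cmod (zp_inner p f (basis_fun p K r)))\<^sup>2" for r
    unfolding trans_prob_def f_def by (subst zp_inner_commute) simp
  ultimately show ?thesis
    using parseval_hilbert_span[of f] by (simp add: zp_inner_self)
qed

end
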